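(* Let $\varepsilon>0$, $\mu\in\mathcal P(\Omega^n)$ and let $\vec V$ be a partition of $[n]$. If $\mu$ fails to be $\varepsilon$-regular with respect to $\vec V$, then there is a partition $\vec W$ of $[n]$ refining $\vec V$ such that $\#\vec W\le2\#\vec V$ and $\mathrm{ind}_\mu(\vec W)\le\mathrm{ind}_\mu(\vec V)-\varepsilon^4/(4|\Omega|^3)$.
   Context: $\Omega$ is a finite nonempty set, $\mathcal P(\Omega^n)$ the set of probability measures on $\Omega^n$, $\|\cdot\|_{TV}$ total variation. For $\sigma\in\Omega^n$, nonempty $S\subset[n]$ and $\omega\in\Omega$ let $\sigma[\omega|S]=|\sigma^{-1}(\omega)\cap S|/|S|$ and $\sigma[\omega|x]=\mathbf 1\{\sigma(x)=\omega\}$; $\langle X(\boldsymbol\sigma)\rangle_\mu=\sum_\sigma\mu(\sigma)X(\sigma)$. For a partition $\vec V=(V_1,\dots,V_k)$ of $[n]$ (size $\#\vec V=k$), $\mathrm{ind}_\mu(\vec V)=\frac1{|\Omega|n}\sum_{\omega}\sum_{j}\sum_{x\in V_j}\langle(\boldsymbol\sigma[\omega|x]-\boldsymbol\sigma[\omega|V_j])^2\rangle_\mu$. $\mu$ is $\varepsilon$-regular on $U\subset[n]$ if for every $S\subset U$ with $|S|\ge\varepsilon|U|$, $\langle\|\boldsymbol\sigma[\cdot|S]-\boldsymbol\sigma[\cdot|U]\|_{TV}\rangle_\mu<\varepsilon$; $\mu$ is $\varepsilon$-regular with respect to $\vec V$ if there is $J\subset[\#\vec V]$ with $\sum_{i\notin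 J}|V_i|<\varepsilon n$ such that $\mu$ is $\varepsilon$-regular on $V_i$ for every $i\in J$. $\vec W$ refines $\vec V$ if each class of $\vec W$ lies in a class of $\vec V$. *)

theory Defs
  imports Complex_Main "HOL-Library.FuncSet"
begin

text \<open>Configurations: \<sigma> \<in> \<Omega>^[n], represented as extensional functions on [n] = {1..n}.
  The spin set \<Omega> is a finite type 'a (automatically nonempty).\<close>

definition configs :: "nat \<Rightarrow> (nat \<Rightarrow> 'a) set" where
  "configs n = ({1..n} \<rightarrow>\<^sub>E (UNIV :: 'a set))"

definition is_prob :: "nat \<Rightarrow> ((nat \<Rightarrow> 'a::finite) \<Rightarrow> real) \<Rightarrow> bool" where
  "is_prob n \<mu> \<longleftrightarrow> (\<forall>\<sigma>\<in>configs n. \<mu> \<sigma> \<ge> 0) \<and> (\<Sum>\<sigma>\<in>configs n. \<mu> \<sigma>) = 1"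

definition expect :: "nat \<Rightarrow> ((nat \<Rightarrow> 'a::finite) \<Rightarrow> real) \<Rightarrow> ((nat \<Rightarrow> 'a) \<Rightarrow> real) \<Rightarrow> real" where
  "expect n \<mu> X = (\<Sum>\<sigma>\<in>configs n. \<mu> \<sigma> * X \<sigma>)"

definition frac :: "(nat \<Rightarrow> 'a) \<Rightarrow> 'a \<Rightarrow> nat set \<Rightarrow> real" where
  "frac \<sigma> \<omega> S = real (card {x\<in>S. \<sigma> x = \<omega>}) / real (card S)"

definition ind1 :: "(nat \<Rightarrow> 'a) \<Rightarrow> 'a \<Rightarrow> nat \<Rightarrow> real" where
  "ind1 \<sigma> \<omega> x = (if \<sigma> x = \<omega> then 1 else 0)"

definition tv :: "('a::finite \<Rightarrow> real) \<Rightarrow> ('a \<Rightarrow> real) \<Rightarrow> real" where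
  "tv p q = (1/2) * (\<Sum>\<omega>\<in>UNIV. \<bar>p \<omega> - q \<omega>\<bar>)"

definition is_partition :: "nat \<Rightarrow> nat set list \<Rightarrow> bool" where
  "is_partition n Vs \<longleftrightarrow>
     (\<forall>i<length Vs. Vs ! i \<noteq> {}) \<and>
     (\<forall>i<length Vs. \<forall>j<length Vs. i \<noteq> j \<longrightarrow> Vs ! i \<inter> Vs ! j = {}) \<and>
     \<Union> (set Vs) = {1..n}"

definition refines :: "nat set list \<Rightarrow> nat set list \<Rightarrow> bool" where
  "refines Ws Vs \<longleftrightarrow> (\<forall>W\<in>set Ws. \<exists>V\<in>set Vs. W \<subseteq> V)"

definition ind :: "nat \<Rightarrow> ((nat \<Rightarrow> 'a::finite) \<Rightarrow> real) \<Rightarrow> nat set list \<Rightarrow> real" where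
  "ind n \<mu> Vs = 1 / (real (card (UNIV::'a set)) * real n) *
     (\<Sum>\<omega>\<in>(UNIV::'a set). \<Sum>j<length Vs. \<Sum>x\<in>Vs ! j.
        expect n \<mu> (\<lambda>\<sigma>. (ind1 \<sigma> \<omega> x - frac \<sigma> \<omega> (Vs ! j))\<^sup>2))"

definition regular_on :: "nat \<Rightarrow> real \<Rightarrow> ((nat \<Rightarrow> 'a::finite) \<Rightarrow> real) \<Rightarrow> nat set \<Rightarrow> bool" where
  "regular_on n \<epsilon> \<mu> U \<longleftrightarrow>
     (\<forall>S\<subseteq>U. real (card S) \<ge> \<epsilon> * real (card U) \<longrightarrow>
        expect n \<mu> (\<lambda>\<sigma>. tv (\<lambda>\<omega>. frac \<sigma> \<omega> S) (\<lambda>\<omega>. frac \<sigma> \<omega> U)) < \<epsilon>)"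

definition regular_wrt :: "nat \<Rightarrow> real \<Rightarrow> ((nat \<Rightarrow> 'a::finite) \<Rightarrow> real) \<Rightarrow> nat set list \<Rightarrow> bool" where
  "regular_wrt n \<epsilon> \<mu> Vs \<longleftrightarrow>
     (\<exists>J\<subseteq>{..<length Vs}.
        (\<Sum>i\<in>{..<length Vs} - J. real (card (Vs ! i))) < \<epsilon> * real n \<and>
        (\<forall>i\<in>J. regular_on n \<epsilon> \<mu> (Vs ! i)))"

end

theory Submission
  imports Defs "HOL-Analysis.Convex"
begin

text \<open>Split every irregular class \<open>V\<close> along a witness \<open>S\<close> of its irregularity. For fixed \<open>\<sigma>\<close> and
  \<open>\<omega>\<close>, the contribution of a class to the index is a within-class variance, and splitting \<open>V\<close>
  into \<open>S\<close> and \<open>V - S\<close> removes at least the between-part variance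
  \<open>|S| (\<sigma>[\<omega>|S] - \<sigma>[\<omega>|V])\<^sup>2\<close>. Summed over \<open>\<omega>\<close> and by Cauchy-Schwarz this is at least
  \<open>4 |S| TV\<^sup>2 / |\<Omega>|\<close>. Irregularity gives \<open>|S| \<ge> \<epsilon> |V|\<close> and \<open>E[TV] \<ge> \<epsilon>\<close>, hence
  \<open>E[TV\<^sup>2] \<ge> \<epsilon>\<^sup>2\<close>, so each irregular class loses \<open>4 \<epsilon>\<^sup>3 |V| / |\<Omega>|\<close>; the irregular classes
  cover at least \<open>\<epsilon> n\<close> points, and at most one new class is created per old one.\<close>

lemma sum_sq_dev_decomp:
  fixes f :: "'b \<Rightarrow> real"
  assumes "finite A" "A \<noteq> {}"
  shows "(\<Sum>x\<in>A. (f x - c)\<^sup>2)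
    = (\<Sum>x\<in>A. (f x - sum f A / card A)\<^sup>2) + card A * (sum f A / card A - c)\<^sup>2"
proof -
  define m where "m = sum f A / card A"
  have "(\<Sum>x\<in>A. f x - m) = 0"
    using assms by (simp add: sum_subtractf m_def)
  moreover have "(\<Sum>x\<in>A. (f x - c)\<^sup>2) = (\<Sum>x\<in>A. (f x - m)\<^sup>2 + 2 * (m - c) * (f x - m) + (m - c)\<^sup>2)"
    by (intro sum.cong refl) (simp add: power2_eq_square algebra_simps)
  ultimately show ?thesis
    by (simp add: sum.distrib flip: sum_distrib_left m_def)
qed

lemma sum_sq_dev_split_ge:
  fixes f :: "'b \<Rightarrow> real"
  defines "m A \<equiv> sum f A / card A"
  assumes V: "finite V" and S: "S \<subseteq> V" "S \<noteq> {}" "V - S \<noteq> {}"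
  shows "real (card S) * (m S - m V)\<^sup>2
    \<le> (\<Sum>x\<in>V. (f x - m V)\<^sup>2) - (\<Sum>x\<in>S. (f x - m S)\<^sup>2) - (\<Sum>x\<in>V - S. (f x - m (V - S))\<^sup>2)"
proof -
  have fin: "finite S" "finite (V - S)" using V S finite_subset by auto
  have dec_S: "(\<Sum>x\<in>S. (f x - m V)\<^sup>2) = (\<Sum>x\<in>S. (f x - m S)\<^sup>2) + card S * (m S - m V)\<^sup>2"
    unfolding m_def by (rule sum_sq_dev_decomp[OF fin(1) S(2)])
  have dec_VS: "(\<Sum>x\<in>V - S. (f x - m V)\<^sup>2)
      = (\<Sum>x\<in>V - S. (f x - m (V - S))\<^sup>2) + card (V - S) * (m (V - S) - m V)\<^sup>2"
    unfolding m_def by (rule sum_sq_dev_decomp[OF fin(2) S(3)])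
  have "(\<Sum>x\<in>V. (f x - m V)\<^sup>2) = (\<Sum>x\<in>S. (f x - m V)\<^sup>2) + (\<Sum>x\<in>V - S. (f x - m V)\<^sup>2)"
    unfolding sum.subset_diff[OF S(1) V] by (rule add.commute)
  then show ?thesis
    unfolding dec_S dec_VS by simp
qed

lemma frac_eq_mean_ind1: "finite A \<Longrightarrow> frac \<sigma> \<omega> A = sum (ind1 \<sigma> \<omega>) A / card A"
  unfolding frac_def ind1_def by (simp add: sum.If_cases Int_def)

lemma tv_square_le:
  fixes p q :: "'a::finite \<Rightarrow> real"
  shows "4 * (tv p q)\<^sup>2 \<le> card (UNIV :: 'a::finite set) * (\<Sum>\<omega>\<in>UNIV. (p \<omega> - q \<omega>)\<^sup>2)"
  using sum_squared_le_sum_of_squares[of "\<lambda>\<omega>. \<bar>p \<omega> - q \<omega>\<bar>" UNIV]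
  unfolding tv_def by (simp add: power_divide mult.commute)

definition class_dev :: "(nat \<Rightarrow> 'a::finite) \<Rightarrow> nat set \<Rightarrow> real" where
  "class_dev \<sigma> W = (\<Sum>\<omega>\<in>UNIV. \<Sum>x\<in>W. (ind1 \<sigma> \<omega> x - frac \<sigma> \<omega> W)\<^sup>2)"

lemma class_dev_split_ge:
  fixes \<sigma> :: "nat \<Rightarrow> 'a::finite"
  assumes "finite V" "S \<subseteq> V" "S \<noteq> {}" "V - S \<noteq> {}"
  shows "4 * real (card S) * (tv (\<lambda>\<omega>. frac \<sigma> \<omega> S) (\<lambda>\<omega>. frac \<sigma> \<omega> V))\<^sup>2 / card (UNIV :: 'a set)
    \<le> class_dev \<sigma> V - class_dev \<sigma> S - class_dev \<sigma> (V - S)"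
proof -
  have fin: "finite S" "finite (V - S)" using assms finite_subset by auto
  have "4 * real (card S) * (tv (\<lambda>\<omega>. frac \<sigma> \<omega> S) (\<lambda>\<omega>. frac \<sigma> \<omega> V))\<^sup>2 / card (UNIV :: 'a set)
      \<le> card S * (\<Sum>\<omega>\<in>UNIV. (frac \<sigma> \<omega> S - frac \<sigma> \<omega> V)\<^sup>2)"
    using mult_left_mono[OF tv_square_le[of "\<lambda>\<omega>. frac \<sigma> \<omega> S" "\<lambda>\<omega>. frac \<sigma> \<omega> V"], of "card S"]
    by (simp add: divide_le_eq finite_UNIV_card_ge_0 algebra_simps)
  also have "\<dots> \<le> class_dev \<sigma> V - class_dev \<sigma> S - class_dev \<sigma> (V - S)"
    unfolding class_dev_def sum_distrib_left sum_subtractf[symmetric]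
    using sum_sq_dev_split_ge[OF assms, of "ind1 \<sigma> _"]
    by (intro sum_mono) (simp add: frac_eq_mean_ind1 assms fin)
  finally show ?thesis .
qed

lemma square_weighted_sum_le:
  fixes w t :: "'b \<Rightarrow> real"
  assumes "\<And>i. i \<in> I \<Longrightarrow> w i \<ge> 0"
  shows "(\<Sum>i\<in>I. w i * t i)\<^sup>2 \<le> (\<Sum>i\<in>I. w i) * (\<Sum>i\<in>I. w i * (t i)\<^sup>2)"
proof -
  have "(\<Sum>i\<in>I. (sqrt (w i) * t i) * sqrt (w i))\<^sup>2
      \<le> (\<Sum>i\<in>I. (sqrt (w i) * t i)\<^sup>2) * (\<Sum>i\<in>I. (sqrt (w i))\<^sup>2)"
    by (rule Cauchy_Schwarz_ineq_sum)
  with assms show ?thesis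
    by (simp add: power_mult_distrib mult.commute mult.left_commute)
qed

lemma expect_square_le: "is_prob n \<mu> \<Longrightarrow> (expect n \<mu> t)\<^sup>2 \<le> expect n \<mu> (\<lambda>\<sigma>. (t \<sigma>)\<^sup>2)"
  using square_weighted_sum_le[of "configs n" \<mu> t] unfolding is_prob_def expect_def by auto

lemma expect_mono:
  "is_prob n \<mu> \<Longrightarrow> (\<And>\<sigma>. f \<sigma> \<le> g \<sigma>) \<Longrightarrow> expect n \<mu> f \<le> expect n \<mu> g"
  unfolding is_prob_def expect_def by (auto intro!: sum_mono mult_left_mono)

lemma expect_diff: "expect n \<mu> (\<lambda>\<sigma>. f \<sigma> - g \<sigma>) = expect n \<mu> f - expect n \<mu> g"
  unfolding expect_def by (simp add: right_diff_distrib sum_subtractf)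

lemma expect_cmult: "expect n \<mu> (\<lambda>\<sigma>. c * f \<sigma>) = c * expect n \<mu> f"
  unfolding expect_def by (simp add: sum_distrib_left algebra_simps)

lemma expect_sum: "expect n \<mu> (\<lambda>\<sigma>. \<Sum>i\<in>I. f i \<sigma>) = (\<Sum>i\<in>I. expect n \<mu> (f i))"
  unfolding expect_def by (simp add: sum_distrib_left sum.swap[of _ I])

definition class_index :: "nat \<Rightarrow> ((nat \<Rightarrow> 'a::finite) \<Rightarrow> real) \<Rightarrow> nat set \<Rightarrow> real" where
  "class_index n \<mu> W = expect n \<mu> (\<lambda>\<sigma>. class_dev \<sigma> W)"

lemma ind_eq_sum_class_index:
  fixes \<mu> :: "(nat \<Rightarrow> 'a::finite) \<Rightarrow> real"
  shows "ind n \<mu> Ws = (\<Sum>j<length Ws. class_index n \<mu> (Ws ! j)) / (card (UNIV :: 'a set) * n)"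
  unfolding ind_def class_index_def class_dev_def expect_sum by (simp add: sum.swap[of _ UNIV])

lemma not_regular_on_split:
  fixes \<mu> :: "(nat \<Rightarrow> 'a::finite) \<Rightarrow> real"
  assumes \<mu>: "is_prob n \<mu>" and "finite V" "V \<noteq> {}" "\<epsilon> > 0" and "\<not> regular_on n \<epsilon> \<mu> V"
  obtains S where "S \<noteq> {}" "S \<subset> V"
    "4 * \<epsilon> ^ 3 * card V / card (UNIV :: 'a set)
       \<le> class_index n \<mu> V - class_index n \<mu> S - class_index n \<mu> (V - S)"
proof -
  define c where "c = real (card (UNIV :: 'a set))"
  have "c > 0" unfolding c_def by (simp add: finite_UNIV_card_ge_0)
  define d where "d S \<sigma> = tv (\<lambda>\<omega>. frac \<sigma> \<omega> S) (\<lambda>\<omega>. frac \<sigma> \<omega> V)" for S and \<sigma> :: "nat \<Rightarrow> 'a"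
  obtain S where "S \<subseteq> V" and S_big: "\<epsilon> * card V \<le> card S" and d_big: "\<epsilon> \<le> expect n \<mu> (d S)"
    using assms unfolding regular_on_def d_def by (auto simp: not_less)
  have "0 < \<epsilon> * card V" using assms by (simp add: card_gt_0_iff)
  with S_big have "S \<noteq> {}" by auto
  have "S \<noteq> V"
  proof
    assume "S = V"
    then have "expect n \<mu> (d S) = 0" by (simp add: d_def tv_def expect_def)
    with d_big \<open>\<epsilon> > 0\<close> show False by simp
  qed
  have "\<epsilon>\<^sup>2 \<le> expect n \<mu> (\<lambda>\<sigma>. (d S \<sigma>)\<^sup>2)"
    using power_mono[OF d_big, of 2] expect_square_le[OF \<mu>, of "d S"] \<open>\<epsilon> > 0\<close> by linarith
  with S_big \<open>\<epsilon> > 0\<close> have "\<epsilon> * card V * \<epsilon>\<^sup>2 \<le> card S * expect n \<mu> (\<lambda>\<sigma>. (d S \<sigma>)\<^sup>2)"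
    by (intro mult_mono) auto
  then have "4 * \<epsilon> ^ 3 * card V / c \<le> 4 * real (card S) / c * expect n \<mu> (\<lambda>\<sigma>. (d S \<sigma>)\<^sup>2)"
    using \<open>c > 0\<close> by (simp add: divide_le_eq power2_eq_square power3_eq_cube algebra_simps)
  also have "\<dots> = expect n \<mu> (\<lambda>\<sigma>. 4 * real (card S) * (d S \<sigma>)\<^sup>2 / c)"
    by (simp add: expect_cmult[symmetric] field_simps)
  also have "\<dots> \<le> class_index n \<mu> V - class_index n \<mu> S - class_index n \<mu> (V - S)"
    unfolding class_index_def expect_diff[symmetric] c_def d_def
    using \<open>S \<subseteq> V\<close> \<open>S \<noteq> {}\<close> \<open>S \<noteq> V\<close> \<open>finite V\<close>
    by (intro expect_mono[OF \<mu>] class_dev_split_ge) blast+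
  finally show ?thesis
    using that \<open>S \<subseteq> V\<close> \<open>S \<noteq> {}\<close> \<open>S \<noteq> V\<close> unfolding c_def by blast
qed

lemma not_regular_wrt_mass:
  assumes "\<not> regular_wrt n \<epsilon> \<mu> Vs"
  shows "\<epsilon> * n \<le> (\<Sum>i | i < length Vs \<and> \<not> regular_on n \<epsilon> \<mu> (Vs ! i). real (card (Vs ! i)))"
proof -
  let ?I = "{i. i < length Vs \<and> \<not> regular_on n \<epsilon> \<mu> (Vs ! i)}"
  let ?J = "{..<length Vs} - ?I"
  have "{..<length Vs} - ?J = ?I" by auto
  then have "regular_wrt n \<epsilon> \<mu> Vs" if "(\<Sum>i\<in>?I. real (card (Vs ! i))) < \<epsilon> * n"
    unfolding regular_wrt_def using that by (intro exI[of _ ?J]) auto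
  with assms show ?thesis using not_less by blast
qed

text \<open>Label \<open>(i, True)\<close> is class \<open>i\<close>, or its part \<open>S i\<close> if \<open>i \<in> I\<close>; label \<open>(i, False)\<close>
  occurs only for \<open>i \<in> I\<close> and is the complement \<open>Vs ! i - S i\<close>.\<close>

definition split_labels :: "nat \<Rightarrow> nat set \<Rightarrow> (nat \<times> bool) list" where
  "split_labels k I = map (\<lambda>i. (i, True)) [0..<k] @ map (\<lambda>i. (i, False)) (filter (\<lambda>i. i \<in> I) [0..<k])"

definition split_classes :: "nat set list \<Rightarrow> nat set \<Rightarrow> (nat \<Rightarrow> nat set) \<Rightarrow> nat set list" where
  "split_classes Vs I S = map (\<lambda>(i, b). if i \<in> I then (if b then S i else Vs ! i - S i) else Vs ! i)
     (split_labels (length Vs) I)"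

lemma distinct_split_labels: "distinct (split_labels k I)"
  unfolding split_labels_def by (auto simp: distinct_map inj_on_def)

lemma set_split_labels: "set (split_labels k I) = {(i, b). i < k \<and> (b \<or> i \<in> I)}"
  unfolding split_labels_def by auto

lemma length_split_classes: "length (split_classes Vs I S) \<le> 2 * length Vs"
  unfolding split_classes_def split_labels_def
  using length_filter_le[of _ "[0..<length Vs]"] by simp

lemma sum_split_classes:
  fixes g :: "nat set \<Rightarrow> real"
  assumes "I \<subseteq> {..<length Vs}"
  shows "(\<Sum>j<length (split_classes Vs I S). g (split_classes Vs I S ! j))
    = (\<Sum>j<length Vs. g (Vs ! j)) - (\<Sum>i\<in>I. g (Vs ! i) - g (S i) - g (Vs ! i - S i))"
proof -
  have "(\<Sum>j<length (split_classes Vs I S). g (split_classes Vs I S ! j)) = sum_list (map g (split_classes Vs I S))"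
    by (simp add: sum_list_sum_nth atLeast0LessThan)
  also have "\<dots> = (\<Sum>i<length Vs. if i \<in> I then g (S i) else g (Vs ! i)) + (\<Sum>i\<in>I. g (Vs ! i - S i))"
  proof -
    have "{i. i < length Vs \<and> i \<in> I} = I" using assms by auto
    then show ?thesis unfolding split_classes_def split_labels_def
      by (simp add: o_def interv_sum_list_conv_sum_set_nat sum_list_distinct_conv_sum_set
          atLeast0LessThan if_distrib flip: sum.inter_filter)
  qed
  also have "(\<Sum>i<length Vs. if i \<in> I then g (S i) else g (Vs ! i))
      = (\<Sum>i<length Vs. g (Vs ! i)) - (\<Sum>i\<in>I. g (Vs ! i) - g (S i))"
    using assms by (simp add: sum.If_cases Int_absorb1 sum_diff[OF finite_lessThan] sum_subtractf flip: Diff_eq)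
  finally show ?thesis by (simp add: sum_subtractf)
qed

lemma is_partition_map:
  assumes "distinct ts" and "\<And>t. t \<in> set ts \<Longrightarrow> f t \<noteq> {}"
    and "\<And>t t'. t \<in> set ts \<Longrightarrow> t' \<in> set ts \<Longrightarrow> t \<noteq> t' \<Longrightarrow> f t \<inter> f t' = {}"
    and "(\<Union>t\<in>set ts. f t) = {1..n}"
  shows "is_partition n (map f ts)"
  using assms unfolding is_partition_def by (auto simp: nth_eq_iff_index_eq)

lemma refines_split_classes:
  assumes "\<And>i. i \<in> I \<Longrightarrow> S i \<subseteq> Vs ! i"
  shows "refines (split_classes Vs I S) Vs"
  unfolding refines_def
proof
  fix W assume "W \<in> set (split_classes Vs I S)"
  then obtain i b where "(i, b) \<in> set (split_labels (length Vs) I)"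
    and W: "W = (if i \<in> I then (if b then S i else Vs ! i - S i) else Vs ! i)"
    unfolding split_classes_def by auto
  then have "Vs ! i \<in> set Vs" and "W \<subseteq> Vs ! i"
    using assms unfolding set_split_labels by auto
  then show "\<exists>V\<in>set Vs. W \<subseteq> V" by blast
qed

lemma is_partition_split_classes:
  assumes Vs: "is_partition n Vs" and I: "I \<subseteq> {..<length Vs}"
    and S: "\<And>i. i \<in> I \<Longrightarrow> S i \<noteq> {} \<and> S i \<subset> Vs ! i"
  shows "is_partition n (split_classes Vs I S)"
proof -
  define piece where "piece = (\<lambda>(i, b). if i \<in> I then (if b then S i else Vs ! i - S i) else Vs ! i)"
  let ?L = "set (split_labels (length Vs) I)"
  have piece_sub: "piece (i, b) \<subseteq> Vs ! i" for i b
    using S unfolding piece_def by auto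
  have "is_partition n (map piece (split_labels (length Vs) I))"
  proof (rule is_partition_map[OF distinct_split_labels])
    show "piece t \<noteq> {}" if "t \<in> ?L" for t
      using that S Vs unfolding piece_def set_split_labels is_partition_def
      by (fastforce split: if_splits)
    show "piece t \<inter> piece t' = {}" if "t \<in> ?L" "t' \<in> ?L" "t \<noteq> t'" for t t'
    proof (cases "fst t = fst t'")
      case True
      then show ?thesis using that unfolding piece_def set_split_labels
        by (auto split: if_splits)
    next
      case False
      moreover have "fst t < length Vs" "fst t' < length Vs"
        using that unfolding set_split_labels by auto
      ultimately have "Vs ! fst t \<inter> Vs ! fst t' = {}"
        using Vs unfolding is_partition_def by blast
      then show ?thesis using piece_sub[of "fst t" "snd t"] piece_sub[of "fst t'" "snd t'"] by auto
    qed
    have "Vs ! i = (\<Union>b\<in>{b. b \<or> i \<in> I}. piece (i, b))" for i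
      using S unfolding piece_def by auto
    then have "(\<Union>t\<in>?L. piece t) = (\<Union>i<length Vs. Vs ! i)"
      unfolding set_split_labels by auto
    also have "\<dots> = {1..n}"
    proof -
      have "set Vs = (!) Vs ` {..<length Vs}" by (auto simp: in_set_conv_nth)
      then show ?thesis using Vs unfolding is_partition_def by simp
    qed
    finally show "(\<Union>t\<in>?L. piece t) = {1..n}" .
  qed
  then show ?thesis unfolding split_classes_def piece_def .
qed

lemma not_regular_wrt_splits:
  fixes \<mu> :: "(nat \<Rightarrow> 'a::finite) \<Rightarrow> real"
  assumes "\<epsilon> > 0" "is_prob n \<mu>" "is_partition n Vs" "\<not> regular_wrt n \<epsilon> \<mu> Vs"
  obtains I S where "I \<subseteq> {..<length Vs}" "\<And>i. i \<in> I \<Longrightarrow> S i \<noteq> {} \<and> S i \<subset> Vs ! i"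
    "4 * \<epsilon> ^ 4 * n / card (UNIV :: 'a set)
       \<le> (\<Sum>i\<in>I. class_index n \<mu> (Vs ! i) - class_index n \<mu> (S i) - class_index n \<mu> (Vs ! i - S i))"
proof -
  define c where "c = real (card (UNIV :: 'a set))"
  define gain where "gain V S = class_index n \<mu> V - class_index n \<mu> S - class_index n \<mu> (V - S)" for V S
  define I where "I = {i. i < length Vs \<and> \<not> regular_on n \<epsilon> \<mu> (Vs ! i)}"
  have "\<exists>S. S \<noteq> {} \<and> S \<subset> Vs ! i \<and> 4 * \<epsilon> ^ 3 * card (Vs ! i) / c \<le> gain (Vs ! i) S" if "i \<in> I" for i
  proof -
    have sub: "Vs ! i \<subseteq> {1..n}" and ne: "Vs ! i \<noteq> {}" and nr: "\<not> regular_on n \<epsilon> \<mu> (Vs ! i)"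
      using that assms(3) nth_mem unfolding I_def is_partition_def by auto
    have "finite (Vs ! i)" using sub finite_subset by blast
    then obtain S where "S \<noteq> {}" "S \<subset> Vs ! i" "4 * \<epsilon> ^ 3 * card (Vs ! i) / c \<le> gain (Vs ! i) S"
      using not_regular_on_split[OF assms(2) _ ne assms(1) nr] unfolding gain_def c_def by blast
    then show ?thesis by blast
  qed
  then obtain S where S: "\<forall>i\<in>I. S i \<noteq> {} \<and> S i \<subset> Vs ! i \<and> 4 * \<epsilon> ^ 3 * card (Vs ! i) / c \<le> gain (Vs ! i) (S i)"
    by (metis bchoice)
  have "4 * \<epsilon> ^ 4 * n / c = 4 * \<epsilon> ^ 3 / c * (\<epsilon> * n)"
    by (simp add: power4_eq_xxxx power3_eq_cube)
  also have "\<dots> \<le> 4 * \<epsilon> ^ 3 / c * (\<Sum>i\<in>I. real (card (Vs ! i)))"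
    using not_regular_wrt_mass[OF assms(4)] assms(1) unfolding I_def c_def by (intro mult_left_mono) auto
  also have "\<dots> \<le> (\<Sum>i\<in>I. gain (Vs ! i) (S i))"
    unfolding sum_distrib_left using S by (intro sum_mono) simp
  finally show ?thesis
    using that[of I S] S unfolding I_def gain_def c_def by auto
qed

theorem lemma2p7:
  fixes \<epsilon> :: real and n :: nat and \<mu> :: "(nat \<Rightarrow> 'a::finite) \<Rightarrow> real" and Vs :: "nat set list"
  assumes "\<epsilon> > 0" and "n \<ge> 1"
    and "is_prob n \<mu>"
    and "is_partition n Vs"
    and "\<not> regular_wrt n \<epsilon> \<mu> Vs"
  shows "\<exists>Ws. is_partition n Ws \<and> refines Ws Vs \<and> length Ws \<le> 2 * length Vs \<and>
           ind n \<mu> Ws \<le> ind n \<mu> Vs - \<epsilon> ^ 4 / (4 * real (card (UNIV::'a set)) ^ 3)"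
proof -
  obtain I S where I: "I \<subseteq> {..<length Vs}" and S: "\<And>i. i \<in> I \<Longrightarrow> S i \<noteq> {} \<and> S i \<subset> Vs ! i"
    and gain: "4 * \<epsilon> ^ 4 * n / card (UNIV :: 'a set)
       \<le> (\<Sum>i\<in>I. class_index n \<mu> (Vs ! i) - class_index n \<mu> (S i) - class_index n \<mu> (Vs ! i - S i))"
    using not_regular_wrt_splits[OF assms(1,3,4,5)] by blast
  define c where "c = real (card (UNIV :: 'a set))"
  define Ws where "Ws = split_classes Vs I S"
  \<comment> \<open>the split gains \<open>4 \<epsilon>\<^sup>4 / |\<Omega>|\<^sup>2\<close>, which dominates the stated \<open>\<epsilon>\<^sup>4 / (4 |\<Omega>|\<^sup>3)\<close>\<close>
  have "c \<ge> 1" "n > 0" using assms(2) unfolding c_def by (simp_all add: Suc_le_eq finite_UNIV_card_ge_0)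
  then have "\<epsilon> ^ 4 / (4 * c ^ 3) = \<epsilon> ^ 4 / c\<^sup>2 * (1 / (4 * c))"
    by (simp add: field_simps power2_eq_square power3_eq_cube)
  also have "\<dots> \<le> \<epsilon> ^ 4 / c\<^sup>2 * 4"
    using \<open>c \<ge> 1\<close> by (intro mult_left_mono) (simp_all add: field_simps)
  also have "\<dots> = 4 * \<epsilon> ^ 4 * n / c / (c * n)"
    using \<open>c \<ge> 1\<close> \<open>n > 0\<close> by (simp add: field_simps power2_eq_square)
  also have "\<dots> \<le> ind n \<mu> Vs - ind n \<mu> Ws"
    using divide_right_mono[OF gain, of "c * n"] \<open>c \<ge> 1\<close> sum_split_classes[OF I, of "class_index n \<mu>" S]
    unfolding ind_eq_sum_class_index Ws_def c_def by (simp add: diff_divide_distrib)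
  finally have "ind n \<mu> Ws \<le> ind n \<mu> Vs - \<epsilon> ^ 4 / (4 * c ^ 3)" by simp
  moreover have "is_partition n Ws"
    unfolding Ws_def by (rule is_partition_split_classes[OF assms(4) I S])
  moreover have "refines Ws Vs"
    unfolding Ws_def using S by (intro refines_split_classes) auto
  moreover have "length Ws \<le> 2 * length Vs"
    unfolding Ws_def by (rule length_split_classes)
  ultimately show ?thesis unfolding c_def by blast
qed

end
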